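(* Let $\mathfrak g=\mathfrak k+_\rho V$ be the semidirect sum of a finite-dimensional real Lie algebra $\mathfrak k$ and a commutative ideal $V$, where $\rho:\mathfrak k\to\operatorname{End}(V)$ is a representation. Let $f$ be a polynomial on $\mathfrak g^*=\mathfrak k^*\oplus V^*$ such that $$f(M,v)=f(M+L,v)\quad\text{for all } (M,v)\in\mathfrak g^* \text{ and all } L\in\mathrm{St}_{\rho^*}(v)^\perp\subset\mathfrak k^*.$$ Then $f\in\operatorname{Ann}(V)$.
   Context: Elements of $\mathfrak g^*$ are written as pairs $(M,v)$ with $M\in\mathfrak k^*$, $v\in V^*$. $\rho^*:\mathfrak k\to\operatorname{End}(V^* )$ is the dual representation, and $\mathrm{St}_{\rho^*}(v)=\{X\in\mathfrak k\mid\rho^*(X)v=0\}$; $\mathrm{St}_{\rho^*}(v)^\perp=\{L\in\mathfrak k^*\mid\langle L,X\rangle=0\ \forall X\in\mathrm{St}_{\rho^*}(v)\}$. $S(\mathfrak g)$ is the polynomial algebra on $\mathfrak g^*$ with Lie–Poisson bracket $\{f,g\}(x)=\langle x,[df(x),dg(x)]\rangle$, and $\operatorname{Ann}(V)=\{f\in S(\mathfrak g)\mid\{f,\eta\}=0\ \forall\eta\in V\}$. *)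

theory Defs
  imports "HOL-Analysis.Analysis"
begin

text \<open>Model: the Lie algebra k is real^'k, the module V is real^'v (finite-dimensional, with
  fixed bases). Dual spaces k^* and V^* are identified with real^'k and real^'v via the standard
  inner product, so g^* = k^* + V^* is (real^'k) \<times> (real^'v).\<close>

definition lie_algebra :: "('a::real_vector \<Rightarrow> 'a \<Rightarrow> 'a) \<Rightarrow> bool" where
  "lie_algebra br \<longleftrightarrow> bilinear br \<and> (\<forall>x. br x x = 0) \<and>
     (\<forall>x y z. br x (br y z) + br y (br z x) + br z (br x y) = 0)"

definition lie_representation ::
  "('a::real_vector \<Rightarrow> 'a \<Rightarrow> 'a) \<Rightarrow> ('a \<Rightarrow> 'b::real_vector \<Rightarrow> 'b) \<Rightarrow> bool" where
  "lie_representation br \<rho> \<longleftrightarrow> (\<forall>w. linear (\<lambda>X. \<rho> X w)) \<and> (\<forall>X. linear (\<rho> X)) \<and>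
     (\<forall>X Y w. \<rho> (br X Y) w = \<rho> X (\<rho> Y w) - \<rho> Y (\<rho> X w))"

text \<open>Dual lie_representation: <rho^*(X) v, w> = - <v, rho(X) w>.\<close>
definition dual_rep :: "(real^'k \<Rightarrow> real^'v \<Rightarrow> real^'v) \<Rightarrow> real^'k \<Rightarrow> real^'v \<Rightarrow> real^'v" where
  "dual_rep \<rho> X v = (\<chi> j. - (v \<bullet> \<rho> X (axis j 1)))"

definition stab :: "(real^'k \<Rightarrow> real^'v \<Rightarrow> real^'v) \<Rightarrow> real^'v \<Rightarrow> (real^'k) set" where
  "stab \<rho> v = {X. dual_rep \<rho> X v = 0}"

definition perp :: "(real^'k) set \<Rightarrow> (real^'k) set" where
  "perp S = {L. \<forall>X\<in>S. L \<bullet> X = 0}"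

inductive poly_fun :: "((real^'k) \<times> (real^'v) \<Rightarrow> real) \<Rightarrow> bool" where
  const: "poly_fun (\<lambda>_. c)"
| coord_k: "poly_fun (\<lambda>x. fst x $ i)"
| coord_v: "poly_fun (\<lambda>x. snd x $ j)"
| add: "poly_fun f \<Longrightarrow> poly_fun g \<Longrightarrow> poly_fun (\<lambda>x. f x + g x)"
| mult: "poly_fun f \<Longrightarrow> poly_fun g \<Longrightarrow> poly_fun (\<lambda>x. f x * g x)"

definition sd_bracket ::
  "(real^'k \<Rightarrow> real^'k \<Rightarrow> real^'k) \<Rightarrow> (real^'k \<Rightarrow> real^'v \<Rightarrow> real^'v) \<Rightarrow>
   (real^'k) \<times> (real^'v) \<Rightarrow> (real^'k) \<times> (real^'v) \<Rightarrow> (real^'k) \<times> (real^'v)" where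
  "sd_bracket br \<rho> p q = (br (fst p) (fst q), \<rho> (fst p) (snd q) - \<rho> (fst q) (snd p))"

definition gpair :: "(real^'k) \<times> (real^'v) \<Rightarrow> (real^'k) \<times> (real^'v) \<Rightarrow> real" where
  "gpair x \<xi> = fst x \<bullet> fst \<xi> + snd x \<bullet> snd \<xi>"

text \<open>Differential df(x) in g = (g^*)^*.\<close>
definition gdiff :: "((real^'k) \<times> (real^'v) \<Rightarrow> real) \<Rightarrow> (real^'k) \<times> (real^'v) \<Rightarrow> (real^'k) \<times> (real^'v)" where
  "gdiff f x = (THE d. (f has_derivative (\<lambda>y. gpair y d)) (at x))"

definition lie_poisson ::
  "(real^'k \<Rightarrow> real^'k \<Rightarrow> real^'k) \<Rightarrow> (real^'k \<Rightarrow> real^'v \<Rightarrow> real^'v) \<Rightarrow>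
   ((real^'k) \<times> (real^'v) \<Rightarrow> real) \<Rightarrow> ((real^'k) \<times> (real^'v) \<Rightarrow> real) \<Rightarrow> (real^'k) \<times> (real^'v) \<Rightarrow> real" where
  "lie_poisson br \<rho> f g x = gpair x (sd_bracket br \<rho> (gdiff f x) (gdiff g x))"

text \<open>An element eta of V, viewed as a linear function on g^*.\<close>
definition lin_fun :: "(real^'k) \<times> (real^'v) \<Rightarrow> (real^'k) \<times> (real^'v) \<Rightarrow> real" where
  "lin_fun \<xi> = (\<lambda>x. gpair x \<xi>)"

definition Ann ::
  "(real^'k \<Rightarrow> real^'k \<Rightarrow> real^'k) \<Rightarrow> (real^'k \<Rightarrow> real^'v \<Rightarrow> real^'v) \<Rightarrow>
   ((real^'k) \<times> (real^'v) \<Rightarrow> real) set" where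
  "Ann br \<rho> = {f. poly_fun f \<and> (\<forall>\<eta>::real^'v. \<forall>x. lie_poisson br \<rho> f (lin_fun (0, \<eta>)) x = 0)}"

end

theory Submission
  imports Defs
begin

text \<open>Write \<open>df(M,v) = (A,B)\<close>. Since \<open>f\<close> is constant along the affine subspace
  \<open>(M,v) + St(v)\<^sup>\<bottom>\<close>, the \<open>\<frak>k\<close>-component \<open>A\<close> is orthogonal to \<open>St(v)\<^sup>\<bottom>\<close>, hence
  \<open>A \<in> St(v)\<close>. Because \<open>V\<close> is a commutative ideal, the only surviving term of
  \<open>{f,\<eta>}(M,v)\<close> for \<open>\<eta> \<in> V\<close> is \<open>\<langle>v, \<rho>(A)\<eta>\<rangle> = -\<langle>\<rho>\<^sup>*(A)v, \<eta>\<rangle>\<close>, which vanishes.\<close>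

lemma gpair_eq_inner: "gpair x \<xi> = x \<bullet> \<xi>"
  by (simp add: gpair_def inner_prod_def)

lemma has_derivative_zero_along_invariant_line:
  assumes f': "(f has_derivative f') (at x)"
    and const: "\<And>t::real. f (x + t *\<^sub>R h) = f x"
  shows "f' h = 0"
proof -
  have "((\<lambda>t::real. x + t *\<^sub>R h) has_derivative (\<lambda>t. t *\<^sub>R h)) (at 0)"
    by (auto intro!: derivative_eq_intros)
  moreover have "(f has_derivative f') (at ((\<lambda>t::real. x + t *\<^sub>R h) 0))"
    using f' by simp
  ultimately have "((\<lambda>t. f (x + t *\<^sub>R h)) has_derivative (\<lambda>t. f' (t *\<^sub>R h))) (at 0)"
    by (rule diff_chain_at[THEN has_derivative_eq_rhs, unfolded o_def]) auto
  hence "((\<lambda>t. f x) has_derivative (\<lambda>t. f' (t *\<^sub>R h))) (at (0::real))"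
    by (simp add: const)
  from has_derivative_unique[OF this has_derivative_const]
  show ?thesis by (metis scaleR_one)
qed

lemma gdiff_eqI:
  assumes "(f has_derivative (\<lambda>y. y \<bullet> d)) (at x)"
  shows "gdiff f x = d"
  unfolding gdiff_def gpair_eq_inner
proof (rule the_equality)
  fix d' assume "(f has_derivative (\<lambda>y. y \<bullet> d')) (at x)"
  from has_derivative_unique[OF assms this] show "d' = d"
    by (metis vector_eq_ldot)
qed (fact assms)

lemma has_derivative_inner_left_self: "((\<lambda>y. y \<bullet> d) has_derivative (\<lambda>y. y \<bullet> d)) (at x)"
  by (rule bounded_linear_imp_has_derivative[OF bounded_linear_inner_left])

lemma gdiff_lin_fun: "gdiff (lin_fun \<xi>) x = \<xi>"
  unfolding lin_fun_def gpair_eq_inner by (intro gdiff_eqI has_derivative_inner_left_self)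

lemma poly_fun_has_inner_derivative:
  "poly_fun f \<Longrightarrow> \<exists>d. (f has_derivative (\<lambda>y. y \<bullet> d)) (at x)"
proof (induction rule: poly_fun.induct)
  case (const c)
  show ?case by (rule exI[of _ 0]) simp
next
  case (coord_k i)
  show ?case
    using has_derivative_inner_left_self[of "(axis i 1, 0)" x]
    by (intro exI[of _ "(axis i 1, 0)"]) (simp add: inner_Pair_0 inner_axis)
next
  case (coord_v j)
  show ?case
    using has_derivative_inner_left_self[of "(0, axis j 1)" x]
    by (intro exI[of _ "(0, axis j 1)"]) (simp add: inner_Pair_0 inner_axis)
next
  case (add f g)
  then obtain d e where "(f has_derivative (\<lambda>y. y \<bullet> d)) (at x)" "(g has_derivative (\<lambda>y. y \<bullet> e)) (at x)"
    by blast
  from has_derivative_add[OF this] show ?case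
    by (intro exI[of _ "d + e"]) (simp add: inner_add_right)
next
  case (mult f g)
  then obtain d e where "(f has_derivative (\<lambda>y. y \<bullet> d)) (at x)" "(g has_derivative (\<lambda>y. y \<bullet> e)) (at x)"
    by blast
  from has_derivative_mult[OF this] show ?case
    by (intro exI[of _ "f x *\<^sub>R e + g x *\<^sub>R d"]) (simp add: inner_add_right mult.commute)
qed

lemma poly_fun_has_derivative_gdiff:
  "poly_fun f \<Longrightarrow> (f has_derivative (\<lambda>y. y \<bullet> gdiff f x)) (at x)"
  using poly_fun_has_inner_derivative gdiff_eqI by metis

lemma perp_perp_subspace:
  fixes S :: "(real^'k) set"
  shows "subspace S \<Longrightarrow> perp (perp S) = S"
  using orthogonal_comp_self[of S]
  by (simp add: perp_def orthogonal_comp_def orthogonal_def inner_commute)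

lemma dual_rep_inner:
  assumes "linear (\<rho> X)"
  shows "dual_rep \<rho> X v \<bullet> w = - (v \<bullet> \<rho> X w)"
proof -
  have "\<rho> X w = (\<Sum>j\<in>UNIV. w $ j *\<^sub>R \<rho> X (axis j 1))"
    using basis_expansion[of w] linear_sum[OF assms] linear_scale[OF assms]
    by (metis (no_types, lifting) scalar_mult_eq_scaleR sum.cong)
  then have "v \<bullet> \<rho> X w = (\<Sum>j\<in>UNIV. w $ j * (v \<bullet> \<rho> X (axis j 1)))"
    by (simp add: inner_sum_right)
  then show ?thesis
    by (simp add: dual_rep_def inner_vec_def sum_negf mult.commute)
qed

lemma stab_eq:
  assumes "\<And>X. linear (\<rho> X)"
  shows "stab \<rho> v = {X. \<forall>w. v \<bullet> \<rho> X w = 0}"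
proof -
  have "dual_rep \<rho> X v = 0 \<longleftrightarrow> (\<forall>w. dual_rep \<rho> X v \<bullet> w = 0)" for X
    by (metis inner_eq_zero_iff inner_zero_left)
  then show ?thesis
    by (simp add: stab_def dual_rep_inner[OF assms])
qed

lemma subspace_stab:
  assumes "\<And>X. linear (\<rho> X)" and "\<And>w. linear (\<lambda>X. \<rho> X w)"
  shows "subspace (stab \<rho> v)"
  using linear_0[OF assms(2)] linear_add[OF assms(2)] linear_scale[OF assms(2)]
  by (simp add: stab_eq[OF assms(1)] subspace_def inner_add_right)

lemma lie_poisson_lin_fun_V:
  assumes "bilinear br" and "\<And>w. linear (\<lambda>X. \<rho> X w)"
  shows "lie_poisson br \<rho> f (lin_fun (0, \<eta>)) x = snd x \<bullet> \<rho> (fst (gdiff f x)) \<eta>"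
  using bilinear_rzero[OF assms(1)] linear_0[OF assms(2)]
  by (simp add: lie_poisson_def gdiff_lin_fun sd_bracket_def gpair_eq_inner inner_prod_def)

theorem lemma11:
  fixes br :: "real^'k \<Rightarrow> real^'k \<Rightarrow> real^'k"
    and \<rho> :: "real^'k \<Rightarrow> real^'v \<Rightarrow> real^'v"
    and f :: "(real^'k) \<times> (real^'v) \<Rightarrow> real"
  assumes "lie_algebra br"
    and "lie_representation br \<rho>"
    and "poly_fun f"
    and "\<forall>M v. \<forall>L\<in>perp (stab \<rho> v). f (M, v) = f (M + L, v)"
  shows "f \<in> Ann br \<rho>"
proof -
  have bil: "bilinear br"
    using assms(1) by (simp add: lie_algebra_def)
  have lin: "\<And>X. linear (\<rho> X)" and lin_left: "\<And>w. linear (\<lambda>X. \<rho> X w)"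
    using assms(2) by (auto simp: lie_representation_def)
  have "lie_poisson br \<rho> f (lin_fun (0, \<eta>)) (M, v) = 0" for \<eta> M v
  proof -
    let ?A = "fst (gdiff f (M, v))"
    have "L \<bullet> ?A = 0" if L: "L \<in> perp (stab \<rho> v)" for L
    proof -
      have "t *\<^sub>R L \<in> perp (stab \<rho> v)" for t
        using L by (simp add: perp_def)
      then have "f ((M, v) + t *\<^sub>R (L, 0)) = f (M, v)" for t
        by (simp add: assms(4)[rule_format, symmetric])
      from has_derivative_zero_along_invariant_line[OF poly_fun_has_derivative_gdiff[OF assms(3)] this]
      show ?thesis by (simp add: inner_prod_def)
    qed
    then have "?A \<in> perp (perp (stab \<rho> v))"
      by (simp add: perp_def inner_commute)
    then have "?A \<in> stab \<rho> v"
      by (simp add: perp_perp_subspace subspace_stab lin lin_left)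
    then show ?thesis
      by (simp add: lie_poisson_lin_fun_V[OF bil lin_left] stab_eq[OF lin])
  qed
  then show ?thesis
    using assms(3) by (auto simp: Ann_def)
qed

end
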